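(* Let $n>2$, let $\mathbf{U}$ be a known real symmetric positive definite $n\times n$ matrix, let $\mathbf{1}=(1,\dots,1)^T\in\mathbb{R}^n$, and let $\mathbf{x}\in\mathbb{R}^n$. Consider the random effects model $M_{RE}$, in which $\mathbf{x}\mid\mu,\tau_{RE}\sim N(\mu\mathbf{1},\mathbf{U}+\tau_{RE}^2\mathbf{I})$, i.e. $$f(\mathbf{x}\mid\mu,\tau_{RE},M_{RE})=\frac{\big(\det(\mathbf{U}+\tau_{RE}^2\mathbf{I})\big)^{-1/2}}{(2\pi)^{n/2}}\exp\Big(-\tfrac12(\mathbf{x}-\mu\mathbf{1})^T(\mathbf{U}+\tau_{RE}^2\mathbf{I})^{-1}(\mathbf{x}-\mu\mathbf{1})\Big),\quad \mu\in\mathbb{R},\ \tau_{RE}>0,$$ with the (improper) prior $\pi^N(\mu,\tau_{RE})=\pi^N(\tau_{RE})=\sqrt{\tau_{RE}^2\,\mathrm{tr}\big((\mathbf{U}+\tau_{RE}^2\mathbf{I})^{-2}\big)}$ on $\mathbb{R}\times(0,\infty)$. Then: (i) The marginal distribution of the whole sample, $m(\mathbf{x}\mid M_{RE})=\int_0^\infty\int_{-\infty}^\infty f(\mathbf{x}\mid\mu,\tau_{RE},M_{RE})\pi^N(\tau_{RE})\,d\mu\,d\tau_{RE}$, equals $$m(\mathbf{x}\mid M_{RE})=\int_0^\infty\frac{(2\pi)^{-\frac{n-1}{2}}\big(\det(\mathbf{U}+\tau_{RE}^2\mathbf{I})\big)^{-1/2}}{\sqrt{\mathbf{1}^T(\mathbf{U}+\tau_{RE}^2\mathbf{I})^{-1}\mathbf{1}}}\exp\Big(-\tfrac12\mathbf{x}^T\mathbf{Q}(\tau_{RE}^2)\mathbf{x}\Big)\pi^N(\tau_{RE})\,d\tau_{RE},$$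 where $\mathbf{Q}(\tau^2)=(\mathbf{U}+\tau^2\mathbf{I})^{-1}-\dfrac{(\mathbf{U}+\tau^2\mathbf{I})^{-1}\mathbf{1}\mathbf{1}^T(\mathbf{U}+\tau^2\mathbf{I})^{-1}}{\mathbf{1}^T(\mathbf{U}+\tau^2\mathbf{I})^{-1}\mathbf{1}}$. (ii) The size of a minimal training sample is $2$: for a single observation $x_i$ (modeled by $x_i\mid\mu,\tau_{RE}\sim N(\mu,u_{ii}+\tau_{RE}^2)$, with the prior $\sqrt{\tau_{RE}^2\,\mathrm{tr}((u_{ii}+\tau_{RE}^2)^{-2})}$ of the same form) the marginal is not finite, while for any training sample $\mathbf{x}_\ell=(x_i,x_j)^T$ with $i\neq j$ (modeled by $\mathbf{x}_\ell\mid\mu,\tau_{RE}\sim N(\mu\mathbf{1}_2,\mathbf{U}_\ell+\tau_{RE}^2\mathbf{I})$ with prior $\pi^N(\tau_{RE})=\sqrt{\tau_{RE}^2\,\mathrm{tr}((\mathbf{U}_\ell+\tau_{RE}^2\mathbf{I})^{-2})}$) the marginal is finite and equals $$m(\mathbf{x}_\ell\mid M_{RE})=\int_0^\infty\frac{(2\pi)^{-\frac12}\big(\det(\mathbf{U}_\ell+\tau_{RE}^2\mathbf{I})\big)^{-1/2}}{\sqrt{\mathbf{1}_2^T(\mathbf{U}_\ell+\tau_{RE}^2\mathbf{I})^{-1}\mathbf{1}_2}}\exp\Big(-\tfrac12\mathbf{x}_\ell^T\mathbf{Q}_\ell(\tau_{RE}^2)\mathbf{x}_\ell\Big)\pi^N(\tau_{RE})\,d\tau_{RE},$$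 where $\mathbf{1}_2=(1,1)^T$, $\mathbf{I}$ is the $2\times2$ identity, $\mathbf{U}_\ell$ is the $2\times2$ principal submatrix of $\mathbf{U}$ formed by rows and columns $i,j$, and $\mathbf{Q}_\ell(\tau^2)=(\mathbf{U}_\ell+\tau^2\mathbf{I})^{-1}-\dfrac{(\mathbf{U}_\ell+\tau^2\mathbf{I})^{-1}\mathbf{1}_2\mathbf{1}_2^T(\mathbf{U}_\ell+\tau^2\mathbf{I})^{-1}}{\mathbf{1}_2^T(\mathbf{U}_\ell+\tau^2\mathbf{I})^{-1}\mathbf{1}_2}$.
   Context: Marginal distribution of data under a model with likelihood $f(\mathbf{x}\mid\boldsymbol\theta)$ and (possibly improper) prior $\pi(\boldsymbol\theta)$: $m(\mathbf{x})=\int f(\mathbf{x}\mid\boldsymbol\theta)\pi(\boldsymbol\theta)\,d\boldsymbol\theta$, with the prior taken exactly as written (no normalizing constant). A training sample is a subvector $\mathbf{x}_\ell$ of $\mathbf{x}$, modeled by the corresponding marginal sub-model; it is called proper if its marginal $m(\mathbf{x}_\ell)$ is finite and positive (equivalently the posterior of the parameters given $\mathbf{x}_\ell$ is proper), and minimal if it is proper and no proper subvector of it is proper. $u_{ii}$ denotes the $i$-th diagonal entry of $\mathbf{U}$; $\mathrm{tr}$ denotes the trace. *)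

theory Defs
  imports "HOL-Analysis.Analysis"
begin

definition sym_posdef :: "real^'k^'k \<Rightarrow> bool" where
  "sym_posdef U \<longleftrightarrow> transpose U = U \<and> (\<forall>v. v \<noteq> 0 \<longrightarrow> v \<bullet> (U *v v) > 0)"

definition re_cov :: "real^'k^'k \<Rightarrow> real \<Rightarrow> real^'k^'k" where
  "re_cov U t = U + (t^2) *\<^sub>R mat 1"

definition re_lik :: "real^'k^'k \<Rightarrow> real^'k \<Rightarrow> real \<Rightarrow> real \<Rightarrow> real" where
  "re_lik U x mu t =
     det (re_cov U t) powr (-1/2) / (2*pi) powr (real CARD('k) / 2)
     * exp (-(1/2) * ((x - mu *\<^sub>R vec 1) \<bullet> (matrix_inv (re_cov U t) *v (x - mu *\<^sub>R vec 1))))"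

definition re_prior :: "real^'k^'k \<Rightarrow> real \<Rightarrow> real" where
  "re_prior U t = sqrt (t^2 * trace (matrix_inv (re_cov U t) ** matrix_inv (re_cov U t)))"

definition re_marginal :: "real^'k^'k \<Rightarrow> real^'k \<Rightarrow> ennreal" where
  "re_marginal U x =
     (\<integral>\<^sup>+ t \<in> {0<..}. (\<integral>\<^sup>+ mu. ennreal (re_lik U x mu t * re_prior U t) \<partial>lborel) \<partial>lborel)"

definition re_Q :: "real^'k^'k \<Rightarrow> real \<Rightarrow> real^'k^'k" where
  "re_Q U t =
     matrix_inv (re_cov U t)
     - (1 / (vec 1 \<bullet> (matrix_inv (re_cov U t) *v vec 1))) *\<^sub>R
         (matrix_inv (re_cov U t) ** (\<chi> i j. 1) ** matrix_inv (re_cov U t))"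

definition re_marginal_formula :: "real^'k^'k \<Rightarrow> real^'k \<Rightarrow> ennreal" where
  "re_marginal_formula U x =
     (\<integral>\<^sup>+ t \<in> {0<..}. ennreal (
        (2*pi) powr (-(real CARD('k) - 1) / 2) * det (re_cov U t) powr (-1/2)
        / sqrt (vec 1 \<bullet> (matrix_inv (re_cov U t) *v vec 1))
        * exp (-(1/2) * (x \<bullet> (re_Q U t *v x)))
        * re_prior U t) \<partial>lborel)"

definition re_lik1 :: "real \<Rightarrow> real \<Rightarrow> real \<Rightarrow> real \<Rightarrow> real" where
  "re_lik1 u x mu t =
     (u + t^2) powr (-1/2) / (2*pi) powr (1/2) * exp (-(1/2) * (x - mu)^2 / (u + t^2))"

definition re_prior1 :: "real \<Rightarrow> real \<Rightarrow> real" where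
  "re_prior1 u t = sqrt (t^2 * inverse ((u + t^2)^2))"

definition re_marginal1 :: "real \<Rightarrow> real \<Rightarrow> ennreal" where
  "re_marginal1 u x =
     (\<integral>\<^sup>+ t \<in> {0<..}. (\<integral>\<^sup>+ mu. ennreal (re_lik1 u x mu t * re_prior1 u t) \<partial>lborel) \<partial>lborel)"

definition sub2_mat :: "real^'n^'n \<Rightarrow> 'n \<Rightarrow> 'n \<Rightarrow> real^2^2" where
  "sub2_mat U i j = (\<chi> a b. U $ (if a = 0 then i else j) $ (if b = 0 then i else j))"

definition sub2_vec :: "real^'n \<Rightarrow> 'n \<Rightarrow> 'n \<Rightarrow> real^2" where
  "sub2_vec x i j = (\<chi> a. x $ (if a = 0 then i else j))"

end

(*
  For fixed tau, write S = U + tau^2 I, a = 1'S^-1 1, b = 1'S^-1 x and d = x'S^-1 x. The exponent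
  of the likelihood is -(a mu^2 - 2 b mu + d)/2, an unnormalised Gaussian in mu, and integrating
  mu out leaves sqrt (2 pi / a) exp (-(d - b^2/a)/2), where d - b^2/a = x'Q x; this gives the
  formula for the marginal in any dimension.

  The prior behaves like 1/tau at infinity. For a single observation the mu-integral returns
  exactly the prior tau / (u + tau^2), whose integral over (0, inf) diverges logarithmically.
  For two observations the remaining factor det(S)^(-1/2) / sqrt a = 1 / sqrt (1'adj(S) 1)
  contributes another 1/tau, so the tau-integrand is bounded near 0 and O(1/tau^2) at infinity.
*)

theory Submission
  imports Defs "HOL-Probability.Probability"
begin

lemma nn_integral_normal_density:
  assumes "s > 0"
  shows "(\<integral>\<^sup>+ x. ennreal (normal_density m s x) \<partial>lborel) = 1"
  using assms by (subst nn_integral_eq_integral) (auto intro: integrable_normal_density simp: integral_normal_density)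

lemma nn_integral_exp_quadratic:
  fixes a b c d :: real
  assumes a: "a > 0"
  shows "(\<integral>\<^sup>+ mu. ennreal (c * exp (-(a*mu^2 - 2*b*mu + d)/2)) \<partial>lborel)
       = ennreal (c * sqrt (2*pi/a) * exp (-(d - b^2/a)/2))"
proof (cases "c \<ge> 0")
  case True
  define K where "K = sqrt (2*pi/a) * exp (-(d - b^2/a)/2)"
  have "K > 0" using a unfolding K_def by auto
  have complete_square:
    "exp (-(a*mu^2 - 2*b*mu + d)/2) = K * normal_density (b/a) (1/sqrt a) mu" for mu
  proof -
    have "normal_density (b/a) (1/sqrt a) mu = 1 / sqrt (2*pi/a) * exp (- ((mu - b/a)^2) * a / 2)"
      using a by (simp add: normal_density_def power_divide field_simps)
    moreover have "exp (-(a*mu^2 - 2*b*mu + d)/2)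
        = exp (-(d - b^2/a)/2) * exp (- ((mu - b/a)^2) * a / 2)"
      unfolding exp_add[symmetric] using a
      by (intro arg_cong[where f=exp]) (simp add: field_simps power2_eq_square)
    ultimately show ?thesis using a unfolding K_def by (simp add: field_simps)
  qed
  have "(\<integral>\<^sup>+ mu. ennreal (c * exp (-(a*mu^2 - 2*b*mu + d)/2)) \<partial>lborel)
      = (\<integral>\<^sup>+ mu. ennreal (c*K) * ennreal (normal_density (b/a) (1/sqrt a) mu) \<partial>lborel)"
    unfolding complete_square using True \<open>K > 0\<close>
    by (intro nn_integral_cong) (simp add: ennreal_mult[symmetric] mult.assoc)
  also have "\<dots> = ennreal (c*K)"
    using a by (subst nn_integral_cmult) (auto simp: nn_integral_normal_density)
  finally show ?thesis unfolding K_def by (simp add: mult.assoc)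
next
  case False
  then have "(\<integral>\<^sup>+ mu. ennreal (c * exp (-(a*mu^2 - 2*b*mu + d)/2)) \<partial>lborel) = 0"
    by (intro nn_integral_zero' AE_I2) (simp add: ennreal_eq_0_iff mult_nonpos_nonneg)
  moreover have "c * sqrt (2*pi/a) * exp (-(d - b^2/a)/2) \<le> 0"
    using False a by (simp add: mult_nonpos_nonneg)
  ultimately show ?thesis by (simp add: ennreal_eq_0_iff)
qed

lemma matrix_inv_left_right:
  fixes A :: "'a::field^'n^'n"
  assumes "invertible A"
  shows "A ** matrix_inv A = mat 1" and "matrix_inv A ** A = mat 1"
  using someI_ex[OF assms[unfolded invertible_def]] by (auto simp: matrix_inv_def)

lemma matrix_inv_eqI:
  fixes A B :: "'a::field^'n^'n"
  assumes AB: "A ** B = mat 1"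
  shows "matrix_inv A = B"
proof -
  have "invertible A" using AB invertible_right_inverse by blast
  have "matrix_inv A = matrix_inv A ** (A ** B)" by (simp add: AB matrix_mul_rid)
  also have "\<dots> = B"
    by (simp add: matrix_mul_assoc matrix_inv_left_right(2)[OF \<open>invertible A\<close>] matrix_mul_lid)
  finally show ?thesis .
qed

lemma inner_matrix_vector_swap:
  fixes M :: "real^'k^'k"
  assumes "transpose M = M"
  shows "x \<bullet> (M *v y) = y \<bullet> (M *v x)"
proof -
  have "x \<bullet> (M *v y) = (x v* M) \<bullet> y" by (simp add: dot_lmul_matrix)
  also have "x v* M = transpose M *v x" by simp
  finally show ?thesis using assms by (simp add: inner_commute)
qed

lemma sym_posdef_invertible:
  fixes A :: "real^'k^'k"
  assumes "sym_posdef A"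
  shows "invertible A"
proof -
  have "\<forall>v. A *v v = 0 \<longrightarrow> v = 0"
    using assms unfolding sym_posdef_def by (metis inner_zero_right less_irrefl)
  then show ?thesis using matrix_left_invertible_ker invertible_left_inverse by blast
qed

lemma sym_posdef_matrix_inv:
  fixes A :: "real^'k^'k"
  assumes A: "sym_posdef A"
  shows "sym_posdef (matrix_inv A)"
proof -
  let ?M = "matrix_inv A"
  have sym: "transpose A = A" and pos: "\<And>v. v \<noteq> 0 \<Longrightarrow> v \<bullet> (A *v v) > 0"
    using A unfolding sym_posdef_def by auto
  note inv = matrix_inv_left_right[OF sym_posdef_invertible[OF A]]
  have "A ** transpose ?M = transpose (?M ** transpose A)"
    by (simp add: matrix_transpose_mul)
  also have "\<dots> = mat 1" using inv(2) sym by (simp add: transpose_mat)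
  finally have "transpose ?M = ?M" by (rule matrix_inv_eqI[symmetric])
  moreover have "v \<bullet> (?M *v v) > 0" if "v \<noteq> 0" for v
  proof -
    define w where "w = ?M *v v"
    have Aw: "A *v w = v"
      unfolding w_def matrix_vector_mul_assoc inv(1) by (rule matrix_vector_mul_lid)
    then have "w \<noteq> 0" using \<open>v \<noteq> 0\<close> by auto
    then have "w \<bullet> (A *v w) > 0" by (rule pos)
    then show ?thesis using Aw by (simp add: w_def inner_commute)
  qed
  ultimately show ?thesis unfolding sym_posdef_def by blast
qed

lemma sym_posdef_re_cov:
  fixes U :: "real^'k^'k"
  assumes "sym_posdef U"
  shows "sym_posdef (re_cov U t)"
proof -
  have "re_cov U t *v v = U *v v + t^2 *\<^sub>R v" for v
    unfolding re_cov_def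
    by (simp add: matrix_vector_mult_add_rdistrib flip: scaleR_matrix_vector_assoc)
  moreover have "transpose (re_cov U t) = re_cov U t"
    using assms unfolding re_cov_def sym_posdef_def by (simp add: transpose_def vec_eq_iff mat_def)
  ultimately show ?thesis
    using assms unfolding sym_posdef_def by (simp add: inner_add_right add_pos_nonneg)
qed

lemma sym_posdef_diag_pos:
  fixes U :: "real^'k^'k"
  assumes "sym_posdef U"
  shows "U $ i $ i > 0"
proof -
  have "axis i 1 \<bullet> (U *v axis i 1) > 0"
    using assms unfolding sym_posdef_def by (simp add: axis_eq_0_iff)
  moreover have "axis i 1 \<bullet> (U *v axis i 1) = (U *v axis i 1) $ i"
    by (simp add: inner_axis')
  moreover have "(U *v axis i 1) $ i = U $ i $ i"
    by (simp add: matrix_vector_mult_def axis_def if_distrib[of "\<lambda>y. _ * y"] cong: if_cong)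
  ultimately show ?thesis by simp
qed

lemma inner_2_matrix_vector:
  "(w::real^2) \<bullet> (V *v w) = w$1 * (V$1$1 * w$1 + V$1$2 * w$2) + w$2 * (V$2$1 * w$1 + V$2$2 * w$2)"
  by (simp add: inner_vec_def sum_2 matrix_vector_mult_def)

lemma sym_posdef_sub2_mat:
  fixes U :: "real^'n^'n"
  assumes U: "sym_posdef U" and ij: "i \<noteq> j"
  shows "sym_posdef (sub2_mat U i j)"
proof -
  have tr: "transpose U = U" and pd: "\<And>v. v \<noteq> 0 \<Longrightarrow> v \<bullet> (U *v v) > 0"
    using U unfolding sym_posdef_def by auto
  have Us: "U $ a $ b = U $ b $ a" for a b
    using arg_cong[OF tr, of "\<lambda>M. M $ b $ a"] by (simp add: transpose_def)
  let ?W = "sub2_mat U i j"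
  \<comment> \<open>In the numeral type 2 the index 0 is the index 2.\<close>
  have "(0::2) = 2" "(1::2) \<noteq> 2" by simp_all
  then have W: "?W$1$1 = U$j$j" "?W$1$2 = U$j$i" "?W$2$1 = U$i$j" "?W$2$2 = U$i$i"
    unfolding sub2_mat_def by auto
  have "transpose ?W = ?W"
    by (simp add: transpose_def sub2_mat_def vec_eq_iff Us)
  moreover have "v \<bullet> (?W *v v) > 0" if v: "v \<noteq> 0" for v :: "real^2"
  proof -
    define w :: "real^'n" where "w = (\<chi> k. (if k = i then v$2 else 0) + (if k = j then v$1 else 0))"
    have wi: "w$i = v$2" "w$j = v$1" unfolding w_def using ij by auto
    have "w \<noteq> 0"
    proof
      assume "w = 0"
      then have "v = 0" using wi by (simp add: vec_eq_iff forall_2)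
      then show False using v by simp
    qed
    then have "w \<bullet> (U *v w) > 0" by (rule pd)
    moreover have "(U *v w)$k = U$k$i * v$2 + U$k$j * v$1" for k
      unfolding w_def using ij
      by (simp add: matrix_vector_mult_def distrib_left sum.distrib if_distrib[of "\<lambda>x. _ * x"] sum.delta cong: if_cong)
    then have "w \<bullet> (U *v w) = v$2 * (U$i$i * v$2 + U$i$j * v$1) + v$1 * (U$j$i * v$2 + U$j$j * v$1)"
      unfolding inner_vec_def w_def using ij
      by (simp add: distrib_right sum.distrib if_distrib[of "\<lambda>x. x * _"] sum.delta cong: if_cong)
    ultimately show ?thesis by (simp add: inner_2_matrix_vector W algebra_simps)
  qed
  ultimately show ?thesis unfolding sym_posdef_def by auto
qed

lemma sym_posdef_2_entries:
  fixes V :: "real^2^2"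
  assumes "sym_posdef V"
  shows "V$2$1 = V$1$2" and "V$1$1 + V$2$2 - 2*V$1$2 > 0" and "V$1$1 * V$2$2 - (V$1$2)^2 > 0"
proof -
  have pd: "\<And>v. v \<noteq> 0 \<Longrightarrow> v \<bullet> (V *v v) > 0" and tr: "transpose V = V"
    using assms unfolding sym_posdef_def by auto
  show s: "V$2$1 = V$1$2"
    using arg_cong[OF tr, of "\<lambda>M. M $ 1 $ 2"] by (simp add: transpose_def)
  have quad: "vector [a, b] \<bullet> (V *v vector [a, b]) = V$1$1 * a^2 + 2 * V$1$2 * a * b + V$2$2 * b^2"
    for a b :: real
    by (simp add: inner_2_matrix_vector vector_2 s power2_eq_square algebra_simps)
  have nz: "vector [a, b] \<noteq> (0::real^2)" if "a \<noteq> 0 \<or> b \<noteq> 0" for a b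
    using that by (auto simp: vec_eq_iff forall_2 vector_2)
  have p: "V$1$1 > 0" using pd[OF nz[of 1 0]] by (simp add: quad)
  show "V$1$1 + V$2$2 - 2*V$1$2 > 0" using pd[OF nz[of 1 "-1"]] by (simp add: quad)
  have "0 < V$1$1 * (V$1$1 * V$2$2 - (V$1$2)^2)"
    using pd[OF nz[of "V$1$2" "-V$1$1"]] p by (simp add: quad algebra_simps power2_eq_square)
  then show "V$1$1 * V$2$2 - (V$1$2)^2 > 0" using p by (simp add: zero_less_mult_iff)
qed

lemma quadratic_form_shift:
  fixes M :: "real^'k^'k"
  assumes "transpose M = M"
  shows "(x - mu *\<^sub>R v) \<bullet> (M *v (x - mu *\<^sub>R v))
     = (v \<bullet> (M *v v)) * mu^2 - 2 * (v \<bullet> (M *v x)) * mu + x \<bullet> (M *v x)"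
  using inner_matrix_vector_swap[OF assms, of x v]
  by (simp add: matrix_vector_mult_diff_distrib matrix_vector_mult_scaleR inner_diff_left
      inner_diff_right algebra_simps power2_eq_square)

lemma re_Q_quadratic_form:
  fixes U :: "real^'k^'k" and t :: real
  assumes "sym_posdef U"
  defines "M \<equiv> matrix_inv (re_cov U t)"
  shows "x \<bullet> (re_Q U t *v x) = x \<bullet> (M *v x) - (vec 1 \<bullet> (M *v x))^2 / (vec 1 \<bullet> (M *v vec 1))"
proof -
  have sym: "transpose M = M"
    using sym_posdef_matrix_inv[OF sym_posdef_re_cov[OF assms(1)]] unfolding M_def sym_posdef_def by blast
  have "((\<chi> i j. 1) :: real^'k^'k) *v w = (vec 1 \<bullet> w) *\<^sub>R vec 1" for w
    by (simp add: vec_eq_iff matrix_vector_mult_def inner_vec_def)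
  then have "(M ** (\<chi> i j. 1) ** M) *v x = (vec 1 \<bullet> (M *v x)) *\<^sub>R (M *v vec 1)"
    by (simp add: matrix_vector_mul_assoc[symmetric] matrix_vector_mult_scaleR)
  then show ?thesis
    using inner_matrix_vector_swap[OF sym, of x "vec 1"]
    by (simp add: re_Q_def M_def[symmetric] matrix_vector_mult_diff_rdistrib inner_diff_right
        flip: scaleR_matrix_vector_assoc) (simp add: power2_eq_square)
qed

lemma re_Q_nonneg:
  fixes U :: "real^'k^'k"
  assumes "sym_posdef U"
  shows "x \<bullet> (re_Q U t *v x) \<ge> 0"
proof -
  let ?M = "matrix_inv (re_cov U t)"
  have M: "sym_posdef ?M" using sym_posdef_matrix_inv[OF sym_posdef_re_cov[OF assms]] .
  define a where "a = vec 1 \<bullet> (?M *v vec 1)"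
  define b where "b = vec 1 \<bullet> (?M *v x)"
  have a: "a > 0" using M unfolding a_def sym_posdef_def by (simp add: vec_eq_iff)
  have "(x - (b/a) *\<^sub>R vec 1) \<bullet> (?M *v (x - (b/a) *\<^sub>R vec 1)) \<ge> 0"
    using M unfolding sym_posdef_def by (metis inner_zero_left order.refl order_less_imp_le)
  also have "(x - (b/a) *\<^sub>R vec 1) \<bullet> (?M *v (x - (b/a) *\<^sub>R vec 1)) = x \<bullet> (re_Q U t *v x)"
    using M a unfolding quadratic_form_shift[OF M[unfolded sym_posdef_def, THEN conjunct1]]
      re_Q_quadratic_form[OF assms] a_def[symmetric] b_def[symmetric]
    by (simp add: field_simps power2_eq_square)
  finally show ?thesis .
qed

definition re_marginal_integrand :: "real^'k^'k \<Rightarrow> real^'k \<Rightarrow> real \<Rightarrow> real" where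
  "re_marginal_integrand U x t =
     (2*pi) powr (-(real CARD('k) - 1) / 2) * det (re_cov U t) powr (-1/2)
     / sqrt (vec 1 \<bullet> (matrix_inv (re_cov U t) *v vec 1))
     * exp (-(1/2) * (x \<bullet> (re_Q U t *v x)))
     * re_prior U t"

lemma re_marginal_formula_eq_integrand:
  "re_marginal_formula U x = (\<integral>\<^sup>+ t \<in> {0<..}. ennreal (re_marginal_integrand U x t) \<partial>lborel)"
  unfolding re_marginal_formula_def re_marginal_integrand_def ..

lemma nn_integral_re_lik:
  fixes U :: "real^'k^'k"
  assumes "sym_posdef U"
  shows "(\<integral>\<^sup>+ mu. ennreal (re_lik U x mu t * re_prior U t) \<partial>lborel)
    = ennreal (re_marginal_integrand U x t)"
proof -
  let ?M = "matrix_inv (re_cov U t)"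
  have M: "sym_posdef ?M" using sym_posdef_matrix_inv[OF sym_posdef_re_cov[OF assms]] .
  define a where "a = vec 1 \<bullet> (?M *v vec 1)"
  define b where "b = vec 1 \<bullet> (?M *v x)"
  define d where "d = x \<bullet> (?M *v x)"
  define c where "c = det (re_cov U t) powr (-1/2) / (2*pi) powr (real CARD('k) / 2) * re_prior U t"
  have a: "a > 0" using M unfolding a_def sym_posdef_def by (simp add: vec_eq_iff)
  have "(\<integral>\<^sup>+ mu. ennreal (re_lik U x mu t * re_prior U t) \<partial>lborel)
     = (\<integral>\<^sup>+ mu. ennreal (c * exp (-(a*mu^2 - 2*b*mu + d)/2)) \<partial>lborel)"
    unfolding re_lik_def quadratic_form_shift[OF M[unfolded sym_posdef_def, THEN conjunct1]]
    by (intro nn_integral_cong arg_cong[where f=ennreal]) (simp add: c_def a_def b_def d_def algebra_simps)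
  also have "\<dots> = ennreal (c * sqrt (2*pi/a) * exp (-(d - b^2/a)/2))"
    by (rule nn_integral_exp_quadratic[OF a])
  also have "c * sqrt (2*pi/a) * exp (-(d - b^2/a)/2)
      = (2*pi) powr (-(real CARD('k) - 1) / 2) * det (re_cov U t) powr (-1/2)
        / sqrt a * exp (-(1/2) * (x \<bullet> (re_Q U t *v x))) * re_prior U t"
  proof -
    have "d - b^2/a = x \<bullet> (re_Q U t *v x)"
      unfolding re_Q_quadratic_form[OF assms] a_def b_def d_def ..
    moreover have "(2*pi) powr (-(real CARD('k) - 1) / 2)
        = sqrt (2*pi) / (2*pi) powr (real CARD('k) / 2)"
      by (simp add: powr_half_sqrt[symmetric] powr_diff[symmetric] diff_divide_distrib)
    ultimately show ?thesis unfolding c_def using a by (simp add: real_sqrt_divide field_simps)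
  qed
  finally show ?thesis unfolding re_marginal_integrand_def a_def .
qed

lemma re_marginal_eq_formula:
  fixes U :: "real^'k^'k"
  assumes "sym_posdef U"
  shows "re_marginal U x = re_marginal_formula U x"
  unfolding re_marginal_def re_marginal_formula_eq_integrand
  by (intro nn_integral_cong) (simp only: nn_integral_re_lik[OF assms])

lemma re_prior1_eq:
  assumes "u > 0" and "t > 0"
  shows "re_prior1 u t = t / (u + t^2)"
  unfolding re_prior1_def using assms
  by (simp add: real_sqrt_mult real_sqrt_divide divide_inverse[symmetric] add_pos_nonneg)

lemma nn_integral_re_lik1:
  assumes u: "u > 0"
  shows "(\<integral>\<^sup>+ mu. ennreal (re_lik1 u x mu t * re_prior1 u t) \<partial>lborel) = ennreal (re_prior1 u t)"
proof -
  define s where "s = u + t^2"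
  have s: "s > 0" unfolding s_def using u by (simp add: add_pos_nonneg)
  define c where "c = s powr (-1/2) / (2*pi) powr (1/2) * re_prior1 u t"
  have "(\<integral>\<^sup>+ mu. ennreal (re_lik1 u x mu t * re_prior1 u t) \<partial>lborel)
     = (\<integral>\<^sup>+ mu. ennreal (c * exp (-((1/s)*mu^2 - 2*(x/s)*mu + x^2/s)/2)) \<partial>lborel)"
  proof (intro nn_integral_cong arg_cong[where f=ennreal])
    fix mu
    have "-(1/2) * (x - mu)^2 / s = -((1/s)*mu^2 - 2*(x/s)*mu + x^2/s)/2"
      using s by (simp add: field_simps power2_eq_square)
    then show "re_lik1 u x mu t * re_prior1 u t = c * exp (-((1/s)*mu^2 - 2*(x/s)*mu + x^2/s)/2)"
      unfolding re_lik1_def c_def s_def[symmetric] by simp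
  qed
  also have "\<dots> = ennreal (c * sqrt (2*pi/(1/s)) * exp (-(x^2/s - (x/s)^2/(1/s))/2))"
    using s by (intro nn_integral_exp_quadratic) simp
  also have "c * sqrt (2*pi/(1/s)) * exp (-(x^2/s - (x/s)^2/(1/s))/2) = re_prior1 u t"
  proof -
    have "x^2/s - (x/s)^2/(1/s) = 0" using s by (simp add: field_simps power2_eq_square)
    moreover have "s powr (-1/2) * sqrt (2*pi * s) / (2*pi) powr (1/2) = 1"
      using s by (simp add: powr_half_sqrt[symmetric] powr_minus powr_mult divide_simps)
    ultimately show ?thesis unfolding c_def by (simp add: divide_simps mult_ac)
  qed
  finally show ?thesis .
qed

lemma nn_integral_re_prior1_lower_bound:
  assumes u: "u > 0" and T: "T \<ge> 1"
  shows "ennreal ((ln (u + T^2) - ln (u + 1)) / 2) \<le> (\<integral>\<^sup>+ t \<in> {0<..}. ennreal (re_prior1 u t) \<partial>lborel)"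
proof -
  let ?f = "\<lambda>t::real. t / (u + t^2)"
  have "(?f has_integral ((\<lambda>t. ln (u + t^2) / 2) T - (\<lambda>t. ln (u + t^2) / 2) 1)) {1..T}"
  proof (rule fundamental_theorem_of_calculus[OF T])
    fix t :: real
    have pos: "u + t^2 > 0" using u by (simp add: add_pos_nonneg)
    have "((\<lambda>t. ln (u + t^2) / 2) has_real_derivative (1/(u+t^2) * (2*t) / 2)) (at t within {1..T})"
      using pos by (auto intro!: derivative_eq_intros simp: divide_simps)
    moreover have "1/(u+t^2) * (2*t) / 2 = ?f t" using pos by (simp add: divide_simps)
    ultimately show "((\<lambda>t. ln (u + t^2) / 2) has_vector_derivative ?f t) (at t within {1..T})"
      by (simp add: has_real_derivative_iff_has_vector_derivative)
  qed
  then have "(\<integral>\<^sup>+ t. ennreal (indicator {1..T} t * ?f t) \<partial>lborel)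
      = ennreal ((ln (u + T^2) - ln (u + 1)) / 2)"
    using u by (subst nn_integral_has_integral_lebesgue) (auto simp: diff_divide_distrib add_pos_nonneg)
  moreover have "(\<integral>\<^sup>+ t. ennreal (indicator {1..T} t * ?f t) \<partial>lborel)
      \<le> (\<integral>\<^sup>+ t \<in> {0<..}. ennreal (re_prior1 u t) \<partial>lborel)"
    using u by (intro nn_integral_mono) (auto simp: re_prior1_eq indicator_def)
  ultimately show ?thesis by simp
qed

lemma nn_integral_re_prior1_eq_infinity:
  assumes u: "u > 0"
  shows "(\<integral>\<^sup>+ t \<in> {0<..}. ennreal (re_prior1 u t) \<partial>lborel) = \<infinity>"
proof (rule ccontr)
  assume "(\<integral>\<^sup>+ t \<in> {0<..}. ennreal (re_prior1 u t) \<partial>lborel) \<noteq> \<infinity>"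
  then obtain R where R: "(\<integral>\<^sup>+ t \<in> {0<..}. ennreal (re_prior1 u t) \<partial>lborel) = ennreal R" "R \<ge> 0"
    using ennreal_cases[of "\<integral>\<^sup>+ t \<in> {0<..}. ennreal (re_prior1 u t) \<partial>lborel"] by auto
  define T where "T = exp (R + ln (u + 1) / 2 + 1)"
  have T: "T \<ge> 1" unfolding T_def using u \<open>R \<ge> 0\<close> by simp
  have "T^2 = exp (2*R + ln (u + 1) + 2)"
    unfolding T_def by (simp add: power2_eq_square exp_add[symmetric])
  then have "ln (u + T^2) \<ge> 2*R + ln (u + 1) + 2"
    using u by (simp add: ln_ge_iff add_pos_nonneg)
  then have "(ln (u + T^2) - ln (u + 1)) / 2 > R" by (simp add: field_simps)
  then show False
    using nn_integral_re_prior1_lower_bound[OF u T] R by (simp add: ennreal_le_iff)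
qed

lemma re_marginal1_eq_infinity:
  assumes u: "u > 0"
  shows "re_marginal1 u x = \<infinity>"
proof -
  have "re_marginal1 u x = (\<integral>\<^sup>+ t \<in> {0<..}. ennreal (re_prior1 u t) \<partial>lborel)"
    unfolding re_marginal1_def by (intro nn_integral_cong) (simp only: nn_integral_re_lik1[OF u])
  also have "\<dots> = \<infinity>" by (rule nn_integral_re_prior1_eq_infinity[OF u])
  finally show ?thesis .
qed

lemma re_cov_2_inverse_det:
  fixes V :: "real^2^2" and t :: real
  assumes V: "sym_posdef V"
  defines "D \<equiv> (V$1$1 + t^2) * (V$2$2 + t^2) - (V$1$2)^2"
  shows "matrix_inv (re_cov V t) = (1/D) *\<^sub>R
      (\<chi> i j. if i = 1 \<and> j = 1 then V$2$2 + t^2 else if i = 2 \<and> j = 2 then V$1$1 + t^2 else - V$1$2)"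
    and "det (re_cov V t) = D" and "D > 0"
proof -
  define p q r s where "p = V$1$1" and "q = V$2$2" and "r = V$1$2" and "s = t^2"
  have "V$2$1 = r" "p * q - r^2 > 0" "p > 0" "q > 0" "s \<ge> 0"
    using sym_posdef_2_entries[OF V] sym_posdef_diag_pos[OF V] by (auto simp: p_def q_def r_def s_def)
  moreover have Dp: "D = (p+s)*(q+s) - r^2"
    unfolding D_def p_def q_def r_def s_def ..
  then have "D = (p*q - r^2) + s*(p+q) + s^2" by (simp add: algebra_simps power2_eq_square)
  ultimately show D: "D > 0" using zero_le_power2[of s] mult_nonneg_nonneg[of s "p+q"] by linarith
  have "(1::2) \<noteq> 2" by simp
  have S: "re_cov V t = (\<chi> i j. if i = 1 \<and> j = 1 then p + s else if i = 2 \<and> j = 2 then q + s else r)"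
    unfolding re_cov_def using \<open>V$2$1 = r\<close> \<open>(1::2) \<noteq> 2\<close>
    by (auto simp: vec_eq_iff forall_2 mat_def p_def q_def r_def s_def)
  show "det (re_cov V t) = D"
    unfolding det_2 S Dp using \<open>(1::2) \<noteq> 2\<close> by (simp add: power2_eq_square)
  have "re_cov V t ** ((1/D) *\<^sub>R
      (\<chi> i j. if i = 1 \<and> j = 1 then q + s else if i = 2 \<and> j = 2 then p + s else - r)) = mat 1"
    unfolding S using D \<open>(1::2) \<noteq> 2\<close>
    by (simp add: vec_eq_iff forall_2 matrix_matrix_mult_def sum_2 mat_def divide_simps)
      (simp add: Dp algebra_simps power2_eq_square)
  then show "matrix_inv (re_cov V t) = (1/D) *\<^sub>R
      (\<chi> i j. if i = 1 \<and> j = 1 then V$2$2 + t^2 else if i = 2 \<and> j = 2 then V$1$1 + t^2 else - V$1$2)"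
    unfolding p_def q_def r_def s_def by (rule matrix_inv_eqI)
qed

lemma re_marginal_integrand_2_le:
  fixes V :: "real^2^2" and y :: "real^2" and t :: real
  assumes V: "sym_posdef V" and t: "t > 0"
  defines "p \<equiv> V$1$1" and "q \<equiv> V$2$2" and "r \<equiv> V$1$2" and "s \<equiv> t^2"
  shows "re_marginal_integrand V y t
    \<le> t * sqrt ((q+s)^2 + 2*r^2 + (p+s)^2) / (((p+s)*(q+s) - r^2) * sqrt (p+q-2*r+2 * s))"
proof -
  define D where "D = (p+s)*(q+s) - r^2"
  define N where "N = (q+s)^2 + 2*r^2 + (p+s)^2"
  define c where "c = p+q-2*r+2 * s"
  note inv = re_cov_2_inverse_det[OF V, of t, unfolded p_def[symmetric] q_def[symmetric]
      r_def[symmetric] s_def[symmetric], folded D_def]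
  have D: "D > 0" using inv(3) .
  have c: "c > 0"
    using sym_posdef_2_entries(2)[OF V] zero_le_power2[of t] unfolding c_def p_def q_def r_def s_def
    by linarith
  have "(1::2) \<noteq> 2" by simp
  have a: "vec 1 \<bullet> (matrix_inv (re_cov V t) *v vec 1) = c / D"
    unfolding inv(1) c_def using \<open>(1::2) \<noteq> 2\<close> D
    by (simp add: inner_vec_def sum_2 matrix_vector_mult_def divide_simps)
  have "trace (matrix_inv (re_cov V t) ** matrix_inv (re_cov V t)) = N / D^2"
    unfolding inv(1) N_def using \<open>(1::2) \<noteq> 2\<close> D
    by (simp add: trace_def sum_2 matrix_matrix_mult_def divide_simps)
      (simp add: power2_eq_square algebra_simps)
  then have prior: "re_prior V t = t * sqrt N / D"
    unfolding re_prior_def using t D by (simp add: real_sqrt_mult real_sqrt_divide)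
  define k where "k = (2*pi) powr (-(real CARD(2) - 1) / 2)"
  define E where "E = exp (-(1/2) * (y \<bullet> (re_Q V t *v y)))"
  have "k \<le> 1" unfolding k_def using pi_gt3 by (auto intro!: ge_one_powr_ge_zero simp: powr_minus_divide)
  moreover have "E \<le> 1" unfolding E_def using re_Q_nonneg[OF V, of y t] by simp
  moreover have "k \<ge> 0" "E \<ge> 0" unfolding k_def E_def by simp_all
  ultimately have kE: "k * E \<le> 1" "k * E \<ge> 0" by (simp_all add: mult_le_one)
  have "re_marginal_integrand V y t = k * (det (re_cov V t) powr (-1/2) / sqrt (c / D)) * E * re_prior V t"
    unfolding re_marginal_integrand_def a k_def E_def by simp
  also have "det (re_cov V t) powr (-1/2) / sqrt (c / D) = 1 / sqrt c"
    using D c by (simp add: inv(2) powr_minus_divide powr_half_sqrt[symmetric] real_sqrt_divide powr_divide)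
  finally have "re_marginal_integrand V y t = k * E * (t * sqrt N / (D * sqrt c))"
    unfolding prior by simp
  also have "\<dots> \<le> t * sqrt N / (D * sqrt c)"
    using kE t D c by (intro mult_left_le_one_le) (simp_all add: N_def)
  finally show ?thesis unfolding D_def N_def c_def .
qed

lemma rational_decay_le_majorant:
  fixes p q r t :: real
  assumes p: "p > 0" and q: "q > 0" and c0: "p + q - 2*r > 0" and e: "p*q - r^2 > 0" and t: "t > 0"
  defines "s \<equiv> t^2" and "L \<equiv> p + q + 2*\<bar>r\<bar> + 2"
  shows "t * sqrt ((q+s)^2 + 2*r^2 + (p+s)^2) / (((p+s)*(q+s) - r^2) * sqrt (p+q-2*r+2 * s))
    \<le> L / ((p*q - r^2) * sqrt (p+q-2*r)) * indicator {0..1} t + L * (indicator {1..} t / t^2)"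
proof -
  define D where "D = (p+s)*(q+s) - r^2"
  define c where "c = p+q-2*r+2 * s"
  define Ls where "Ls = (p+s) + (q+s) + 2*\<bar>r\<bar>"
  have s: "s \<ge> 0" unfolding s_def by simp
  have "D = (p*q - r^2) + s*(p+q) + s^2" unfolding D_def by (simp add: algebra_simps power2_eq_square)
  then have De: "D \<ge> (p*q - r^2) + s^2" using s p q by (simp add: add_nonneg_nonneg)
  then have D: "D > 0" using e zero_le_power2[of s] by linarith
  have c: "c > 0" unfolding c_def using c0 s by simp
  have Ls: "Ls \<ge> 0" unfolding Ls_def using p q s by simp
  have "Ls^2 = (q+s)^2 + 2*r^2 + (p+s)^2 + (2*r^2 + 2*(p+s)*(q+s) + 4*\<bar>r\<bar>*(p+s) + 4*\<bar>r\<bar>*(q+s))"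
    unfolding Ls_def by (simp add: power2_eq_square algebra_simps)
  moreover have "2*(p+s)*(q+s) + 4*\<bar>r\<bar>*(p+s) + 4*\<bar>r\<bar>*(q+s) \<ge> 0" using p q s by simp
  ultimately have "(q+s)^2 + 2*r^2 + (p+s)^2 \<le> Ls^2" by simp
  then have "sqrt ((q+s)^2 + 2*r^2 + (p+s)^2) \<le> Ls" using Ls by (rule real_le_lsqrt[rotated])
  then have "t * sqrt ((q+s)^2 + 2*r^2 + (p+s)^2) / (D * sqrt c) \<le> t * Ls / (D * sqrt c)"
    using t D c by (intro divide_right_mono mult_left_mono) auto
  also have "t * Ls / (D * sqrt c)
    \<le> L / ((p*q - r^2) * sqrt (p+q-2*r)) * indicator {0..1} t + L * (indicator {1..} t / t^2)"
  proof (cases "t \<le> 1")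
    case True
    then have "s \<le> 1" unfolding s_def using t by (simp add: power_le_one)
    then have "Ls \<le> L" unfolding Ls_def L_def by simp
    moreover have "t * Ls \<le> Ls" using True t Ls by (simp add: mult_left_le_one_le)
    ultimately have "t * Ls \<le> L" by linarith
    moreover have "(p*q - r^2) * sqrt (p+q-2*r) \<le> D * sqrt c"
    proof (rule mult_mono)
      show "p*q - r^2 \<le> D" using De zero_le_power2[of s] by linarith
    qed (use D s c0 in \<open>auto simp: c_def\<close>)
    ultimately have "t * Ls / (D * sqrt c) \<le> L / ((p*q - r^2) * sqrt (p+q-2*r))"
      using e c0 t Ls p q by (intro frac_le) (auto simp: L_def)
    moreover have "L \<ge> 0" unfolding L_def using p q by simp
    ultimately show ?thesis using True t by (intro add_increasing2) (simp_all add: indicator_def)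
  next
    case False
    then have "s \<ge> 1" unfolding s_def by (simp add: one_le_power)
    then have "p + q + 2*\<bar>r\<bar> \<le> (p + q + 2*\<bar>r\<bar>) * s" using p q by (simp add: mult_le_cancel_left1)
    then have "Ls \<le> L * s" unfolding Ls_def L_def by (simp add: algebra_simps)
    then have "t * Ls \<le> t * (L * t^2)" using t unfolding s_def by simp
    moreover have "t^4 * t \<le> D * sqrt c"
    proof (rule mult_mono)
      show "t^4 \<le> D" using De e unfolding s_def by (simp add: power_even_eq)
      show "t \<le> sqrt c" using c0 t unfolding c_def s_def by (intro real_le_rsqrt) simp
    qed (use D t in auto)
    ultimately have "t * Ls / (D * sqrt c) \<le> t * (L * t^2) / (t^4 * t)"
      using t Ls p q by (intro frac_le) (auto simp: L_def)
    also have "\<dots> = L / t^2" using t by (simp add: field_simps power2_eq_square power4_eq_xxxx)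
    finally show ?thesis using False by (simp add: indicator_def)
  qed
  finally show ?thesis unfolding D_def c_def .
qed

lemma nn_integral_step_inverse_square_finite:
  fixes C K :: real
  assumes "C \<ge> 0" and "K \<ge> 0"
  shows "(\<integral>\<^sup>+ t. ennreal (C * indicator {0..1} t + K * (indicator {1..} t / t^2)) \<partial>lborel) < \<infinity>"
proof -
  have inverse_square: "(\<integral>\<^sup>+ t. ennreal (indicator {1..} t / t^2) \<partial>lborel) = 1"
    using nn_integral_has_integral_lebesgue[OF _ has_integral_inverse_power_to_inf[of 2 1]]
    by simp
  have "(\<integral>\<^sup>+ t. ennreal (C * indicator {0..1} t + K * (indicator {1..} t / t^2)) \<partial>lborel)
      = (\<integral>\<^sup>+ t. ennreal C * indicator {0..1} t + ennreal K * ennreal (indicator {1..} t / t^2) \<partial>lborel)"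
    using assms by (intro nn_integral_cong) (simp add: ennreal_plus ennreal_mult[symmetric] indicator_def)
  also have "\<dots> = ennreal C * emeasure lborel {0..1::real} + ennreal K * 1"
    by (subst nn_integral_add) (auto simp: nn_integral_cmult inverse_square)
  finally show ?thesis by (simp add: ennreal_mult_less_top)
qed

lemma re_marginal_formula_2_finite:
  fixes V :: "real^2^2" and y :: "real^2"
  assumes V: "sym_posdef V"
  shows "re_marginal_formula V y < \<infinity>"
proof -
  note entries = sym_posdef_2_entries[OF V]
  define L where "L = V$1$1 + V$2$2 + 2*\<bar>V$1$2\<bar> + 2"
  define C where "C = L / ((V$1$1 * V$2$2 - (V$1$2)^2) * sqrt (V$1$1 + V$2$2 - 2*V$1$2))"
  have "L \<ge> 0" "C \<ge> 0"
    using entries sym_posdef_diag_pos[OF V] unfolding C_def L_def by simp_all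
  have "re_marginal_formula V y
      \<le> (\<integral>\<^sup>+ t. ennreal (C * indicator {0..1} t + L * (indicator {1..} t / t^2)) \<partial>lborel)"
    unfolding re_marginal_formula_eq_integrand
  proof (rule nn_integral_mono)
    fix t :: real
    have "re_marginal_integrand V y t \<le> C * indicator {0..1} t + L * (indicator {1..} t / t^2)"
      if "t > 0"
      using order_trans[OF re_marginal_integrand_2_le[OF V that]
          rational_decay_le_majorant[OF _ _ entries(2,3) that]]
        sym_posdef_diag_pos[OF V] unfolding C_def L_def by simp
    then show "ennreal (re_marginal_integrand V y t) * indicator {0<..} t
        \<le> ennreal (C * indicator {0..1} t + L * (indicator {1..} t / t^2))"
      by (cases "t > 0") (auto intro: ennreal_leI)
  qed
  also have "\<dots> < \<infinity>" using \<open>C \<ge> 0\<close> \<open>L \<ge> 0\<close> by (rule nn_integral_step_inverse_square_finite)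
  finally show ?thesis .
qed

theorem theorem2:
  fixes U :: "real^'n^'n" and x :: "real^'n"
  assumes "CARD('n) > 2"
    and "sym_posdef U"
  shows "re_marginal U x = re_marginal_formula U x
    \<and> (\<forall>i. re_marginal1 (U $ i $ i) (x $ i) = \<infinity>)
    \<and> (\<forall>i j. i \<noteq> j \<longrightarrow>
          re_marginal (sub2_mat U i j) (sub2_vec x i j) < \<infinity>
        \<and> re_marginal (sub2_mat U i j) (sub2_vec x i j)
            = re_marginal_formula (sub2_mat U i j) (sub2_vec x i j))"
proof (intro conjI allI impI)
  show "re_marginal U x = re_marginal_formula U x"
    using assms(2) by (rule re_marginal_eq_formula)
next
  fix i
  show "re_marginal1 (U $ i $ i) (x $ i) = \<infinity>"
    using sym_posdef_diag_pos[OF assms(2)] by (rule re_marginal1_eq_infinity)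
next
  fix i j :: 'n
  assume "i \<noteq> j"
  then have V: "sym_posdef (sub2_mat U i j)" using assms(2) by (rule sym_posdef_sub2_mat[rotated])
  show "re_marginal (sub2_mat U i j) (sub2_vec x i j) = re_marginal_formula (sub2_mat U i j) (sub2_vec x i j)"
    using V by (rule re_marginal_eq_formula)
  then show "re_marginal (sub2_mat U i j) (sub2_vec x i j) < \<infinity>"
    using re_marginal_formula_2_finite[OF V] by simp
qed

end
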